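(* For all integers $0\le k\le n$, $$\binom{n}{k}_F\equiv \begin{cases} 0 & \text{if } n\equiv 0 \pmod 3 \text{ and } k\equiv 1\pmod 3,\\[4pt] \dbinom{\lceil 2n/3\rceil}{\lceil 2k/3\rceil} & \text{if } n\equiv 1 \pmod 3 \text{ and } k\equiv 0\pmod 3,\\[8pt] \dbinom{\lfloor 2n/3\rfloor}{\lfloor 2k/3\rfloor} & \text{otherwise}, \end{cases} \pmod 2,$$ where $\binom{a}{b}$ denotes the ordinary binomial coefficient (equal to $0$ if $b<0$ or $b>a$), and $\lceil\cdot\rceil,\lfloor\cdot\rfloor$ are the ceiling and floor functions.
   Context: The Fibonacci numbers are defined by $F_0=0$, $F_1=1$, $F_n=F_{n-1}+F_{n-2}$ for $n\ge 2$. For $n\ge 0$ let $n!_F=F_1F_2\cdots F_n$ (with $0!_F=1$), and for $0\le k\le n$ define the Fibonomial coefficient $\binom{n}{k}_F=\dfrac{n!_F}{k!_F\,(n-k)!_F}$; by convention $\binom{n}{k}_F=0$ if $k<0$ or $k>n$. *)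

theory Defs
  imports Complex_Main
begin

fun fibo :: "nat \<Rightarrow> nat" where
  "fibo 0 = 0"
| "fibo (Suc 0) = 1"
| "fibo (Suc (Suc n)) = fibo (Suc n) + fibo n"

definition fibfact :: "nat \<Rightarrow> nat" where
  "fibfact n = (\<Prod>i=1..n. fibo i)"

text \<open>Fibonomial coefficient n!_F / (k!_F (n-k)!_F) for k \<le> n, and 0 otherwise.
  The quotient is an integer (classical), so nat division is exact.\<close>
definition fibonomial :: "nat \<Rightarrow> nat \<Rightarrow> nat" where
  "fibonomial n k = (if k \<le> n then fibfact n div (fibfact k * fibfact (n - k)) else 0)"

end

theory Submission
  imports Defs "HOL-Number_Theory.Fib"
begin

(* The Fibonomial coefficients satisfy a Fibonacci analogue of Pascal's rule,
     C(n+1,k+1) = F_k C(n,k+1) + F_(n-k+1) C(n,k),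
   which follows from the addition formula F_(n+1) = F_(k+1) F_(n-k+1) + F_k F_(n-k).
   Modulo 2 the Fibonacci factors only depend on residues modulo 3 (F_m is even iff 3 | m),
   so the parities of the Fibonomials are determined by a Pascal-like recurrence with
   coefficients depending on n, k mod 3.  We check, by splitting n and k into residue classes
   modulo 3, that the explicit binomial expression of the theorem satisfies the same
   recurrence modulo 2 together with the same boundary values; induction on n then shows that
   both agree modulo 2.  Finally the floors and ceilings of 2n/3 are turned into nat division. *)

text \<open>The Fibonacci function of the statement coincides with the library one, so the library's
  addition formula, positivity and gcd law become available.\<close>
lemma fibo_eq_fib: "fibo n = fib n"
  by (induction n rule: fibo.induct) simp_all

lemma fibfact_Suc: "fibfact (Suc n) = fibo (Suc n) * fibfact n"
  unfolding fibfact_def by (simp add: prod.nat_ivl_Suc' mult.commute)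

lemma fibfact_pos: "0 < fibfact n"
  unfolding fibfact_def fibo_eq_fib by (auto intro!: prod_pos fib_neq_0_nat)

lemma divisors_3:
  fixes d :: nat
  assumes "d dvd 3"
  shows "d \<in> {1, 3}"
proof -
  have "d \<in> {1, 2, 3}"
    using assms dvd_imp_le[OF assms] by (auto simp: numeral_3_eq_3 le_Suc_eq)
  moreover have "\<not> (2::nat) dvd 3"
    by simp
  ultimately show ?thesis
    using assms by auto
qed

text \<open>A Fibonacci number is even exactly when its index is a multiple of 3: by the gcd law
  gcd (F m) 2 = gcd (F m) (F 3) = F (gcd m 3), and F 1 = 1, F 3 = 2.\<close>
lemma even_fib_iff: "even (fib m) \<longleftrightarrow> 3 dvd m"
proof -
  have fib3: "fib 3 = 2"
    by (simp add: numeral_3_eq_3)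
  have "even (fib m) \<longleftrightarrow> gcd (fib m) (fib 3) = 2"
    unfolding fib3 by (metis gcd_proj2_if_dvd_nat gcd_dvd1)
  also have "\<dots> \<longleftrightarrow> fib (gcd m 3) = 2"
    by (simp add: fib_gcd)
  also have "\<dots> \<longleftrightarrow> gcd m 3 = 3"
  proof -
    have "gcd m 3 \<in> {1, 3}"
      using divisors_3[OF gcd_dvd2[of m 3]] .
    then show ?thesis using fib3 by auto
  qed
  also have "\<dots> \<longleftrightarrow> 3 dvd m"
    by (metis gcd_dvd1 gcd_nat.absorb2)
  finally show ?thesis .
qed

lemma fibo_mod2: "fibo m mod 2 = (if m mod 3 = 0 then 0 else 1)"
  using even_fib_iff[of m] by (auto simp: fibo_eq_fib odd_iff_mod_2_eq_one)

fun fibonomial_rec :: "nat \<Rightarrow> nat \<Rightarrow> nat" where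
  "fibonomial_rec n 0 = 1"
| "fibonomial_rec 0 (Suc k) = 0"
| "fibonomial_rec (Suc n) (Suc k) =
     fibo k * fibonomial_rec n (Suc k) + fibo (Suc (n - k)) * fibonomial_rec n k"

lemma fibonomial_rec_above: "n < k \<Longrightarrow> fibonomial_rec n k = 0"
  by (induction n k rule: fibonomial_rec.induct) auto

text \<open>The recurrence reproduces the factorial formula: C(n,k) k!_F (n-k)!_F = n!_F.  The
  induction step combines both summands by the addition formula
  F_(n+1) = F_(k+1) F_(n-k+1) + F_k F_(n-k).\<close>
lemma fibonomial_rec_fibfact:
  "k \<le> n \<Longrightarrow> fibonomial_rec n k * fibfact k * fibfact (n - k) = fibfact n"
proof (induction n arbitrary: k)
  case 0
  then show ?case by (simp add: fibfact_def)
next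
  case (Suc n)
  show ?case
  proof (cases k)
    case 0
    then show ?thesis by (simp add: fibfact_def)
  next
    case (Suc j)
    with Suc.prems have "j \<le> n" by simp
    have right: "fibo (Suc (n - j)) * fibonomial_rec n j * fibfact (Suc j) * fibfact (n - j)
        = fibo (Suc (n - j)) * fibo (Suc j) * fibfact n"
      using Suc.IH[OF \<open>j \<le> n\<close>] by (simp add: fibfact_Suc algebra_simps)
    have left: "fibo j * fibonomial_rec n (Suc j) * fibfact (Suc j) * fibfact (n - j)
        = fibo j * fibo (n - j) * fibfact n"
    proof (cases "j = n")
      case True
      then show ?thesis by (simp add: fibonomial_rec_above)
    next
      case False
      with \<open>j \<le> n\<close> have "Suc j \<le> n" and "n - j = Suc (n - Suc j)" by simp_all
      then show ?thesis
        using Suc.IH[OF \<open>Suc j \<le> n\<close>] by (simp add: fibfact_Suc algebra_simps)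
    qed
    have addition: "fibo (Suc n) = fibo (Suc j) * fibo (Suc (n - j)) + fibo j * fibo (n - j)"
      using fib_add[of j "n - j"] \<open>j \<le> n\<close> by (simp add: fibo_eq_fib mult.commute)
    have "fibonomial_rec (Suc n) k * fibfact k * fibfact (Suc n - k)
        = fibo j * fibonomial_rec n (Suc j) * fibfact (Suc j) * fibfact (n - j)
          + fibo (Suc (n - j)) * fibonomial_rec n j * fibfact (Suc j) * fibfact (n - j)"
      using Suc by (simp add: algebra_simps)
    also have "\<dots> = fibo (Suc n) * fibfact n"
      unfolding left right addition by (simp add: algebra_simps)
    finally show ?thesis by (simp add: fibfact_Suc)
  qed
qed

lemma fibonomial_eq_rec: "k \<le> n \<Longrightarrow> fibonomial n k = fibonomial_rec n k"
  using fibonomial_rec_fibfact[of k n] fibfact_pos[of k] fibfact_pos[of "n - k"]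
  unfolding fibonomial_def by (metis mult.assoc nonzero_mult_div_cancel_right
      mult_pos_pos less_numeral_extra(3))

text \<open>The right-hand side of the theorem, with the floors and ceilings of 2n/3 written
  as nat divisions.\<close>
definition binom_model :: "nat \<Rightarrow> nat \<Rightarrow> nat" where
  "binom_model n k =
    (if n mod 3 = 0 \<and> k mod 3 = 1 then 0
     else if n mod 3 = 1 \<and> k mod 3 = 0 then (2 * n + 2) div 3 choose ((2 * k + 2) div 3)
     else 2 * n div 3 choose (2 * k div 3))"

lemma residues_mod3 [simp]:
  fixes a :: nat
  shows "(3 * a) mod 3 = 0" "(3 * a + 1) mod 3 = 1" "(3 * a + 2) mod 3 = 2"
    "2 * (3 * a) div 3 = 2 * a" "2 * (3 * a + 1) div 3 = 2 * a" "2 * (3 * a + 2) div 3 = 2 * a + 1"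
    "(2 * (3 * a) + 2) div 3 = 2 * a" "(2 * (3 * a + 1) + 2) div 3 = 2 * a + 1"
    "(2 * (3 * a + 2) + 2) div 3 = 2 * a + 2"
  by presburger+

lemma nat_mod3_cases:
  fixes n :: nat
  obtains a where "n = 3 * a" | a where "n = 3 * a + 1" | a where "n = 3 * a + 2"
proof -
  have "\<exists>a. n = 3 * a \<or> n = 3 * a + 1 \<or> n = 3 * a + 2"
    by presburger
  then show ?thesis
    using that by blast
qed

lemma binom_model_classes:
  "binom_model (3 * a) (3 * b) = (2 * a choose (2 * b))"
  "binom_model (3 * a) (3 * b + 1) = 0"
  "binom_model (3 * a) (3 * b + 2) = (2 * a choose (2 * b + 1))"
  "binom_model (3 * a + 1) (3 * b) = (2 * a + 1 choose (2 * b))"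
  "binom_model (3 * a + 1) (3 * b + 1) = (2 * a choose (2 * b))"
  "binom_model (3 * a + 1) (3 * b + 2) = (2 * a choose (2 * b + 1))"
  "binom_model (3 * a + 2) (3 * b) = (2 * a + 1 choose (2 * b))"
  "binom_model (3 * a + 2) (3 * b + 1) = (2 * a + 1 choose (2 * b))"
  "binom_model (3 * a + 2) (3 * b + 2) = (2 * a + 1 choose (2 * b + 1))"
  unfolding binom_model_def by (simp only: residues_mod3; simp)+

lemma Suc_mod3_classes: "Suc (3 * a) = 3 * a + 1" "Suc (3 * a + 1) = 3 * a + 2"
  "Suc (3 * a + 2) = 3 * (a + 1)"
  by simp_all

lemma binom_model_above: "binom_model n (Suc n) = 0"
  by (cases n rule: nat_mod3_cases) (simp_all only: Suc_mod3_classes binom_model_classes, simp_all)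

text \<open>The model satisfies the Fibonacci--Pascal rule modulo 2, with F_k replaced by its
  parity (0 iff 3 divides k) and F_(n-k+1) by its parity (0 iff n+1 and k agree mod 3).  Each of the nine residue cases
  reduces to an instance of Pascal's rule or to a trivial identity.\<close>
lemma binom_model_rec_mod2:
  "binom_model (Suc n) (Suc k) mod 2 =
     ((if k mod 3 = 0 then 0 else 1) * binom_model n (Suc k)
      + (if Suc n mod 3 = k mod 3 then 0 else 1) * binom_model n k) mod 2"
  by (cases n rule: nat_mod3_cases; cases k rule: nat_mod3_cases)
    (simp_all only: Suc_mod3_classes binom_model_classes residues_mod3,
     simp_all add: ac_simps)

lemma mod_linear_combination:
  fixes a b c d m :: nat
  shows "(a * b + c * d) mod m = (a mod m * (b mod m) + c mod m * (d mod m)) mod m"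
proof -
  have "(a * b + c * d) mod m = (a * b mod m + c * d mod m) mod m"
    by (rule mod_add_eq[symmetric])
  also have "\<dots> = (a mod m * (b mod m) mod m + c mod m * (d mod m) mod m) mod m"
    by (simp only: mod_mult_eq)
  also have "\<dots> = (a mod m * (b mod m) + c mod m * (d mod m)) mod m"
    by (rule mod_add_eq)
  finally show ?thesis .
qed

text \<open>Both sides obey the same recurrence modulo 2 and agree on the boundary, hence agree
  modulo 2 everywhere below the diagonal.\<close>
lemma fibonomial_rec_mod2:
  "k \<le> n \<Longrightarrow> fibonomial_rec n k mod 2 = binom_model n k mod 2"
proof (induction n arbitrary: k)
  case 0
  then show ?case by (simp add: binom_model_def)
next
  case (Suc n)
  show ?case
  proof (cases k)
    case 0
    then show ?thesis by (simp add: binom_model_def)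
  next
    case (Suc j)
    with Suc.prems have "j \<le> n" by simp
    have IH_next: "fibonomial_rec n (Suc j) mod 2 = binom_model n (Suc j) mod 2"
      using Suc.IH[of "Suc j"] \<open>j \<le> n\<close>
      by (cases "j = n") (simp_all add: fibonomial_rec_above binom_model_above)
    have IH_same: "fibonomial_rec n j mod 2 = binom_model n j mod 2"
      using Suc.IH \<open>j \<le> n\<close> by simp
    have residue: "Suc (n - j) mod 3 = 0 \<longleftrightarrow> Suc n mod 3 = j mod 3"
      using \<open>j \<le> n\<close> by (simp add: mod_eq_dvd_iff_nat Suc_diff_le dvd_eq_mod_eq_0)
    let ?c = "if j mod 3 = 0 then 0 else 1 :: nat"
    let ?d = "if Suc n mod 3 = j mod 3 then 0 else 1 :: nat"
    have "fibonomial_rec (Suc n) (Suc j) mod 2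
        = (fibo j mod 2 * (fibonomial_rec n (Suc j) mod 2)
           + fibo (Suc (n - j)) mod 2 * (fibonomial_rec n j mod 2)) mod 2"
      unfolding fibonomial_rec.simps by (rule mod_linear_combination)
    also have "\<dots> = (?c mod 2 * (binom_model n (Suc j) mod 2)
           + ?d mod 2 * (binom_model n j mod 2)) mod 2"
      unfolding IH_next IH_same fibo_mod2 residue by simp
    also have "\<dots> = (?c * binom_model n (Suc j) + ?d * binom_model n j) mod 2"
      by (rule mod_linear_combination[symmetric])
    also have "\<dots> = binom_model (Suc n) (Suc j) mod 2"
      by (rule binom_model_rec_mod2[symmetric])
    finally show ?thesis using Suc by simp
  qed
qed

lemma nat_floor_two_thirds: "nat \<lfloor>(2 * real n) / 3\<rfloor> = 2 * n div 3"
  using floor_divide_of_nat_eq[of "2 * n" 3, where 'a = real] by simp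

lemma nat_ceiling_two_thirds: "nat \<lceil>(2 * real n) / 3\<rceil> = (2 * n + 2) div 3"
proof -
  have "\<lceil>(2 * real n) / 3\<rceil> = - (- int (2 * n) div 3)"
    using ceiling_divide_eq_div[of "int (2 * n)" 3] by simp
  also have "\<dots> = int ((2 * n + 2) div 3)"
    by presburger
  finally show ?thesis by simp
qed

theorem mainTheorem3:
  fixes n k :: nat
  assumes "k \<le> n"
  shows "fibonomial n k mod 2 =
    (if n mod 3 = 0 \<and> k mod 3 = 1 then 0
     else if n mod 3 = 1 \<and> k mod 3 = 0
       then (nat \<lceil>(2 * real n) / 3\<rceil> choose nat \<lceil>(2 * real k) / 3\<rceil>) mod 2
     else (nat \<lfloor>(2 * real n) / 3\<rfloor> choose nat \<lfloor>(2 * real k) / 3\<rfloor>) mod 2)"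
proof -
  have "fibonomial n k mod 2 = binom_model n k mod 2"
    using fibonomial_eq_rec[OF assms] fibonomial_rec_mod2[OF assms] by simp
  then show ?thesis
    unfolding nat_floor_two_thirds nat_ceiling_two_thirds binom_model_def by simp
qed

end
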